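(* Let $f\colon M\to\mathbb{R}$ be a Morse function on a compact oriented smooth $n$-manifold, with Morse complex defined using a Morse–Smale metric. For any nontrivial commutative ring $\mathbb{K}$ with unity and any grading $k\in\{0,\dots,n-1\}$, $\beta^{alg}_k(f;\mathbb{K})=0$ if and only if $d_{f,k+1}=0$. Furthermore, if $\mathbb{K}$ is a field, then $\beta^{alg}_k(f;\mathbb{K})=\inf\{\beta\ge0:\ \forall\lambda\in\mathbb{R},\ \mathrm{Im}(d_{f,k+1})\cap CM^\lambda_k(f;\mathbb{K})\subset d_{f,k+1}(CM^{\lambda+\beta}_{k+1}(f;\mathbb{K}))\}$.
   Context: $CM_*(\pm f;\mathbb{K})$ are the Morse complexes (free $\mathbb{K}$-modules on critical points, the index of $p$ for $-f$ being $n-|p|_f$) with differentials $d_{\pm f}$ defined with the standard coherent orientation conventions: unstable manifolds of $f$ oriented arbitrarily (orientation of $M$ in index $n$, positive point in index $0$), stable manifolds oriented so that $W^u_f(p)\cap W^s_f(p)$ is a single positive point in the fiber product orientation, and $W^u_{-f}(p)=W^s_f(p)$. $\Pi(\sum_qa_qq,\sum_pb_pp)=\sum_pa_pb_p$ on $CM_{n-*}(-f)\times CM_*(f)$. $\Lambda\colon\mathrm{Im}(d_{-f})\times\mathrm{Im}(d_f)\to\mathbb{K}$, $\Lambda(x,y)=\Pi(x,z)$ for any $z$ with $d_fz=y$. $\ell_f(\sum_pa_pp)=\max\{f(p):a_p\ne0\}$ (with $\max\varnothing=-\infty$), $\ell_{-f}$ likewise for $-f$; $CM^\lambda_*(f;\mathbb{K})=\{y:\ell_f(y)\le\lambda\}$.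 $\beta^{alg}_k(f;\mathbb{K})=\sup(\{0\}\cup\{-\ell_{-f}(x)-\ell_f(y):x\in\mathrm{Im}(d_{-f,n-k}),y\in\mathrm{Im}(d_{f,k+1}),\Lambda(x,y)\ne0\})$. *)

theory Defs
  imports "HOL-Library.Extended_Real"
begin

text \<open>The critical points of the Morse function form the
finite type 'p.  ind p is the Morse index |p|_f, crit p = f(p) the critical value.
N p q is the (signed, integer) count of negative gradient flow lines from p to q,
so that d_f p = sum_q N p q q.  The Morse complex over a ring K consists of the
functions 'p => K (free K-module on the critical points), graded by the index.\<close>

definition chains :: "('p \<Rightarrow> nat) \<Rightarrow> nat \<Rightarrow> ('p \<Rightarrow> 'k::zero) set" where
  "chains ind k = {c. \<forall>p. c p \<noteq> 0 \<longrightarrow> ind p = k}"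

definition dF :: "('p::finite \<Rightarrow> 'p \<Rightarrow> int) \<Rightarrow> ('p \<Rightarrow> 'k::comm_ring_1) \<Rightarrow> ('p \<Rightarrow> 'k)" where
  "dF N c = (\<lambda>q. \<Sum>p\<in>UNIV. of_int (N p q) * c p)"

text \<open>Morse differential of -f: same flow lines (W^u_{-f}(p) = W^s_f(p)), with the
sign eps (ind q) coming from the coherent orientation conventions.\<close>
definition dMF :: "('p::finite \<Rightarrow> 'p \<Rightarrow> int) \<Rightarrow> (nat \<Rightarrow> int) \<Rightarrow> ('p \<Rightarrow> nat)
    \<Rightarrow> ('p \<Rightarrow> 'k::comm_ring_1) \<Rightarrow> ('p \<Rightarrow> 'k)" where
  "dMF N eps ind c = (\<lambda>p. \<Sum>q\<in>UNIV. of_int (eps (ind q) * N p q) * c q)"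

definition Pairing :: "('p::finite \<Rightarrow> 'k::comm_ring_1) \<Rightarrow> ('p \<Rightarrow> 'k) \<Rightarrow> 'k" where
  "Pairing x y = (\<Sum>p\<in>UNIV. x p * y p)"

definition LambdaF :: "('p::finite \<Rightarrow> 'p \<Rightarrow> int) \<Rightarrow> ('p \<Rightarrow> nat) \<Rightarrow> nat
    \<Rightarrow> ('p \<Rightarrow> 'k::comm_ring_1) \<Rightarrow> ('p \<Rightarrow> 'k) \<Rightarrow> 'k" where
  "LambdaF N ind k x y = Pairing x (SOME z. z \<in> chains ind (Suc k) \<and> dF N z = y)"

definition lev :: "('p::finite \<Rightarrow> real) \<Rightarrow> ('p \<Rightarrow> 'k::zero) \<Rightarrow> ereal" where
  "lev f c = (if (\<forall>p. c p = 0) then -\<infinity> else ereal (Max (f ` {p. c p \<noteq> 0})))"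

definition CMlev :: "('p::finite \<Rightarrow> nat) \<Rightarrow> ('p \<Rightarrow> real) \<Rightarrow> nat \<Rightarrow> real \<Rightarrow> ('p \<Rightarrow> 'k::zero) set" where
  "CMlev ind f k lam = {y \<in> chains ind k. lev f y \<le> ereal lam}"

definition beta_alg :: "'k::comm_ring_1 itself \<Rightarrow> ('p::finite \<Rightarrow> 'p \<Rightarrow> int) \<Rightarrow> (nat \<Rightarrow> int)
    \<Rightarrow> ('p \<Rightarrow> nat) \<Rightarrow> ('p \<Rightarrow> real) \<Rightarrow> nat \<Rightarrow> ereal" where
  "beta_alg (_::'k itself) N eps ind f k =
     Sup ({0} \<union> {- lev (\<lambda>p. - f p) x - lev f y | x y :: 'p \<Rightarrow> 'k.
            x \<in> dMF N eps ind ` chains ind k \<and> y \<in> dF N ` chains ind (Suc k) \<and>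
            LambdaF N ind k x y \<noteq> 0})"

end

theory Submission
  imports Defs "HOL-Library.Function_Algebras"
begin

text \<open>By the adjunction Pairing (d_{-f} u) z = \<plusminus>Pairing u (d_f z), the number beta^alg_k is the
supremum of the gaps  min f|supp(d_{-f} u) - max f|supp(d_f z)  over cochains u of degree k and
chains z of degree k+1 that are linked, i.e. Pairing u (d_f z) \<noteq> 0.

If d_{f,k+1} \<noteq> 0, let q be the highest critical point occurring in a boundary of degree k+1 and
p the lowest critical point of degree k+1 whose boundary contains q; the point masses at q and at p
are linked with gap at least f p - f q > 0, as f decreases along flow lines.

Over a field the two descriptions of beta^alg_k are compared by duality. If a boundary y of level
\<lambda> is d_f z' with z' of level \<lambda> + \<beta>, then every cochain u linked to y pairs nontrivially
with z', so some critical point of level at most \<lambda> + \<beta> lies in the support of d_{-f} u and the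
gap is at most \<beta>. Conversely, if y is not the boundary of a chain of level \<lambda> + \<beta>, a linear
functional separates y from the subspace d_f(CM^{\<lambda>+\<beta>}_{k+1}); restricted to degree k it is a
cochain u linked to y for which d_{-f} u only involves critical points above \<lambda> + \<beta>, so the
gap exceeds \<beta>.\<close>

lemma sum_fun_apply: "finite A \<Longrightarrow> sum g A x = (\<Sum>a\<in>A. g a x)"
  by (induct rule: finite_induct) auto

lemma linear_functional_eq_Pairing:
  fixes g :: "('p::finite \<Rightarrow> 'F::field) \<Rightarrow> 'F"
  assumes lin: "Vector_Spaces.linear (\<lambda>c x p. c * x p) (*) g"
  shows "g v = Pairing (\<lambda>q. g (\<lambda>p. if p = q then 1 else 0)) v"
proof -
  interpret P: vector_space_pair "\<lambda>(c::'F) (x::'p\<Rightarrow>'F). (\<lambda>p. c * x p)" "(*)::'F\<Rightarrow>'F\<Rightarrow>'F"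
    by unfold_locales (auto simp: algebra_simps)
  have "v = (\<Sum>q\<in>UNIV. (\<lambda>p. v q * (if p = q then 1 else 0)))"
    by (rule ext) (simp add: sum_fun_apply if_distrib cong: if_cong)
  then have "g v = (\<Sum>q\<in>UNIV. g (\<lambda>p. v q * (if p = q then 1 else 0)))"
    by (metis P.linear_sum[OF lin])
  also have "\<dots> = (\<Sum>q\<in>UNIV. v q * g (\<lambda>p. if p = q then 1 else 0))"
    by (intro sum.cong refl) (rule P.linear_scale[OF lin])
  finally show ?thesis
    unfolding Pairing_def by (simp add: mult.commute)
qed

lemma Pairing_separates_subspace:
  fixes U :: "('p::finite \<Rightarrow> 'F::field) set" and y :: "'p \<Rightarrow> 'F"
  assumes zero_in: "0 \<in> U"
    and add_in: "\<And>a b. a \<in> U \<Longrightarrow> b \<in> U \<Longrightarrow> a + b \<in> U"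
    and scale_in: "\<And>c a. a \<in> U \<Longrightarrow> (\<lambda>p. c * a p) \<in> U"
    and y_notin: "y \<notin> U"
  obtains u where "\<And>v. v \<in> U \<Longrightarrow> Pairing u v = 0" and "Pairing u y \<noteq> 0"
proof -
  interpret V: vector_space "\<lambda>(c::'F) (x::'p\<Rightarrow>'F). (\<lambda>p. c * x p)"
    by unfold_locales (auto simp: algebra_simps)
  interpret P: vector_space_pair "\<lambda>(c::'F) (x::'p\<Rightarrow>'F). (\<lambda>p. c * x p)" "(*)::'F\<Rightarrow>'F\<Rightarrow>'F"
    by unfold_locales (auto simp: algebra_simps)
  have "V.subspace U"
    unfolding V.subspace_def using zero_in add_in scale_in by auto
  obtain B0 where B0: "B0 \<subseteq> U" "V.independent B0" "U \<subseteq> V.span B0"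
    using V.maximal_independent_subset by blast
  have span_B0: "V.span B0 = U"
    using B0 \<open>V.subspace U\<close> by (metis V.span_eq V.span_minimal subset_antisym)
  with y_notin have y_notin_span: "y \<notin> V.span B0" by simp
  define B where "B = insert y B0"
  have indep_B: "V.independent B"
    unfolding B_def by (rule V.independent_insertI[OF y_notin_span B0(2)])
  define g where "g = P.construct B (\<lambda>b. if b = y then 1 else 0)"
  have lin: "Vector_Spaces.linear (\<lambda>(c::'F) (x::'p\<Rightarrow>'F). (\<lambda>p. c * x p)) (*) g"
    unfolding g_def by (rule P.linear_construct[OF indep_B])
  have g_y: "g y = 1"
    unfolding g_def B_def using indep_B[unfolded B_def] by (subst P.construct_basis) auto
  have "g b = 0" if "b \<in> B0" for b
    unfolding g_def using indep_B that y_notin_span B_def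
    by (subst P.construct_basis) (auto intro: V.span_base)
  then have g_U: "g v = 0" if "v \<in> U" for v
    using P.linear_eq_0_on_span[OF lin, of B0 v] that span_B0 by auto
  show ?thesis
    using that[of "\<lambda>q. g (\<lambda>p. if p = q then 1 else 0)"] g_U g_y
    by (simp add: linear_functional_eq_Pairing[OF lin, symmetric])
qed

lemma finite_rel_extremal_pair:
  fixes R :: "('a \<times> 'b) set" and g :: "'b \<Rightarrow> 'c::linorder" and h :: "'a \<Rightarrow> 'c"
  assumes "finite R" and "R \<noteq> {}"
  obtains a b where "(a, b) \<in> R" and "\<And>b'. b' \<in> Range R \<Longrightarrow> g b' \<le> g b"
    and "\<And>a'. (a', b) \<in> R \<Longrightarrow> h a \<le> h a'"
proof -
  have "Max (g ` Range R) \<in> g ` Range R"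
    using assms by (intro Max_in) (auto simp: finite_Range)
  then obtain b where b: "b \<in> Range R" "g b = Max (g ` Range R)" by (metis imageE)
  have g_max: "g b' \<le> g b" if "b' \<in> Range R" for b'
    using that b(2) assms(1) by (simp add: finite_Range)
  define A where "A = {a. (a, b) \<in> R}"
  have "finite A"
    unfolding A_def using assms(1) by (rule finite_subset[rotated, OF finite_Domain]) auto
  moreover have "A \<noteq> {}"
    using b(1) unfolding A_def by auto
  ultimately have "Min (h ` A) \<in> h ` A" by (intro Min_in) auto
  then obtain a where "a \<in> A" "h a = Min (h ` A)" by (metis imageE)
  then show ?thesis
    using that[of a b] g_max \<open>finite A\<close> unfolding A_def by auto
qed

lemma lev_le_iff: "lev g (c :: 'p::finite \<Rightarrow> 'k::zero) \<le> ereal a \<longleftrightarrow> (\<forall>p. c p \<noteq> 0 \<longrightarrow> g p \<le> a)"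
  by (auto simp: lev_def)

lemma lev_ge: "c p \<noteq> 0 \<Longrightarrow> ereal (g p) \<le> lev g (c :: 'p::finite \<Rightarrow> 'k::zero)"
  by (auto simp: lev_def)

lemma lev_attained:
  assumes "c p \<noteq> 0"
  obtains q where "c q \<noteq> 0" and "lev g (c :: 'p::finite \<Rightarrow> 'k::zero) = ereal (g q)"
proof -
  have "Max (g ` {p. c p \<noteq> 0}) \<in> g ` {p. c p \<noteq> 0}"
    using assms by (intro Max_in) auto
  then obtain q where "c q \<noteq> 0" "g q = Max (g ` {p. c p \<noteq> 0})" by auto
  then show ?thesis
    by (intro that[of q]) (auto simp: lev_def)
qed

lemma lev_gap_attained:
  fixes x y :: "'p::finite \<Rightarrow> 'k::zero" and f :: "'p \<Rightarrow> real"
  assumes "x p \<noteq> 0" and "y q \<noteq> 0"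
  obtains px qy where "x px \<noteq> 0" and "y qy \<noteq> 0"
    and "- lev (\<lambda>p. - f p) x - lev f y = ereal (f px - f qy)"
    and "\<And>p. x p \<noteq> 0 \<Longrightarrow> f px \<le> f p" and "\<And>q. y q \<noteq> 0 \<Longrightarrow> f q \<le> f qy"
proof -
  obtain px where px: "x px \<noteq> 0" "lev (\<lambda>p. - f p) x = ereal (- f px)"
    using lev_attained[where c = x and g = "\<lambda>p. - f p", OF assms(1)] by metis
  obtain qy where qy: "y qy \<noteq> 0" "lev f y = ereal (f qy)"
    using lev_attained[where c = y and g = f, OF assms(2)] by metis
  have "f px \<le> f p" if "x p \<noteq> 0" for p
    using lev_ge[where c = x and g = "\<lambda>p. - f p", OF that] px(2) by simp
  moreover have "f q \<le> f qy" if "y q \<noteq> 0" for q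
    using lev_ge[where c = y and g = f, OF that] qy(2) by simp
  ultimately show ?thesis
    using that px qy by simp
qed

lemma mem_CMlev:
  "w \<in> CMlev ind f m \<mu> \<longleftrightarrow> (\<forall>p. w p \<noteq> 0 \<longrightarrow> ind p = m \<and> f p \<le> \<mu>)"
  by (auto simp: CMlev_def chains_def lev_le_iff)

lemma zero_in_CMlev: "(\<lambda>_. 0) \<in> CMlev ind f m \<mu>"
  by (simp add: mem_CMlev)

lemma add_in_CMlev:
  assumes "w \<in> CMlev ind f m \<mu>" and "w' \<in> CMlev ind f m \<mu>"
  shows "w + w' \<in> (CMlev ind f m \<mu> :: ('p::finite \<Rightarrow> 'k::monoid_add) set)"
  unfolding mem_CMlev
proof (intro allI impI)
  fix p
  assume "(w + w') p \<noteq> 0"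
  then have "w p \<noteq> 0 \<or> w' p \<noteq> 0"
    by auto
  then show "ind p = m \<and> f p \<le> \<mu>"
    using assms unfolding mem_CMlev by blast
qed

lemma scale_in_CMlev:
  "w \<in> CMlev ind f m \<mu> \<Longrightarrow> (\<lambda>p. c * w p) \<in> (CMlev ind f m \<mu> :: ('p::finite \<Rightarrow> 'k::mult_zero) set)"
  unfolding mem_CMlev by (metis mult_zero_right)

lemma Pairing_nonzero_common_support: "Pairing x z \<noteq> 0 \<Longrightarrow> \<exists>p. x p \<noteq> 0 \<and> z p \<noteq> 0"
  unfolding Pairing_def by (metis (mono_tags, lifting) mult_not_zero sum.neutral)

lemma Pairing_point_mass_right: "Pairing x (\<lambda>p. if p = a then 1 else 0) = x a"
  by (simp add: Pairing_def if_distrib cong: if_cong)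

lemma Pairing_point_mass_left: "Pairing (\<lambda>p. if p = a then 1 else 0) x = x a"
proof -
  have e: "(\<lambda>p. (if p = a then 1 else 0) * x p) = (\<lambda>p. if p = a then x p else 0)"
    by auto
  show ?thesis
    unfolding Pairing_def e by simp
qed

lemma Pairing_chains_restrict:
  assumes "v \<in> chains ind k"
  shows "Pairing (\<lambda>q. if ind q = k then u q else 0) v = Pairing u v"
proof -
  have "v q = 0" if "ind q \<noteq> k" for q
    using assms that by (auto simp: chains_def)
  then show ?thesis
    unfolding Pairing_def by (intro sum.cong refl) simp
qed

lemma dF_zero: "dF N (\<lambda>_. 0) = (\<lambda>_. 0 :: 'k::comm_ring_1)"
  by (simp add: dF_def)

lemma dF_add: "dF N (a + b) = dF N a + (dF N b :: 'p::finite \<Rightarrow> 'k::comm_ring_1)"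
  by (rule ext) (simp add: dF_def sum.distrib algebra_simps)

lemma dF_scale: "dF N (\<lambda>p. c * w p) = (\<lambda>q. c * dF N w q :: 'k::comm_ring_1)"
  by (rule ext) (simp add: dF_def sum_distrib_left algebra_simps)

lemma dF_point_mass: "dF N (\<lambda>p. if p = a then 1 else 0) = (\<lambda>q. of_int (N a q) :: 'k::comm_ring_1)"
  by (rule ext) (simp add: dF_def if_distrib cong: if_cong)

lemma dMF_point_mass:
  "dMF N eps ind (\<lambda>q. if q = a then 1 else 0) = (\<lambda>p. of_int (eps (ind a) * N p a) :: 'k::comm_ring_1)"
  by (rule ext) (simp add: dMF_def if_distrib cong: if_cong)

lemma Pairing_dMF:
  assumes "u \<in> chains ind k"
  shows "Pairing (dMF N eps ind u) z = of_int (eps k) * Pairing u (dF N z :: 'p::finite \<Rightarrow> 'k::comm_ring_1)"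
proof -
  have "of_int (eps (ind q) * N p q) * u q * z p = of_int (eps k) * (u q * (of_int (N p q) * z p))"
    for p q
    using assms by (cases "u q = 0") (auto simp: chains_def mult_ac)
  then have "Pairing (dMF N eps ind u) z
      = (\<Sum>p\<in>UNIV. \<Sum>q\<in>UNIV. of_int (eps k) * (u q * (of_int (N p q) * z p)))"
    unfolding Pairing_def dMF_def by (simp add: sum_distrib_right)
  also have "\<dots> = (\<Sum>q\<in>UNIV. \<Sum>p\<in>UNIV. of_int (eps k) * (u q * (of_int (N p q) * z p)))"
    by (rule sum.swap)
  also have "\<dots> = of_int (eps k) * Pairing u (dF N z)"
    unfolding Pairing_def dF_def by (simp add: sum_distrib_left)
  finally show ?thesis .
qed

lemma LambdaF_dMF_dF:
  assumes "u \<in> chains ind k" and "z \<in> chains ind (Suc k)"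
  shows "LambdaF N ind k (dMF N eps ind u) (dF N z)
           = of_int (eps k) * Pairing u (dF N z :: 'p::finite \<Rightarrow> 'k::comm_ring_1)"
proof -
  let ?z = "SOME z'. z' \<in> chains ind (Suc k) \<and> dF N z' = dF N z"
  have "dF N ?z = dF N z"
    using someI[of "\<lambda>z'. z' \<in> chains ind (Suc k) \<and> dF N z' = dF N z"] assms(2) by blast
  then show ?thesis
    unfolding LambdaF_def using Pairing_dMF[OF assms(1), of N eps ?z] by simp
qed

lemma exists_extremal_incidence:
  fixes N :: "'p::finite \<Rightarrow> 'p \<Rightarrow> int" and c :: "'p \<Rightarrow> 'k::comm_ring_1"
    and f :: "'p \<Rightarrow> 'a::linorder"
  assumes c: "c \<in> chains ind (Suc k)" and "dF N c q \<noteq> 0"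
  obtains p0 q0 where "ind p0 = Suc k" and "of_int (N p0 q0) \<noteq> (0::'k)"
    and "\<And>p q. ind p = Suc k \<Longrightarrow> of_int (N p q) \<noteq> (0::'k) \<Longrightarrow> f q \<le> f q0"
    and "\<And>p. ind p = Suc k \<Longrightarrow> of_int (N p q0) \<noteq> (0::'k) \<Longrightarrow> f p0 \<le> f p"
proof -
  define R where "R = {(p, q). ind p = Suc k \<and> of_int (N p q) \<noteq> (0::'k)}"
  obtain p where "of_int (N p q) * c p \<noteq> (0::'k)"
    using \<open>dF N c q \<noteq> 0\<close> unfolding dF_def by (metis (mono_tags, lifting) sum.neutral)
  then have "of_int (N p q) \<noteq> (0::'k)" and "c p \<noteq> 0"
    by auto
  with c have "R \<noteq> {}"
    unfolding R_def chains_def by auto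
  then obtain p0 q0 where "(p0, q0) \<in> R" and "\<And>q. q \<in> Range R \<Longrightarrow> f q \<le> f q0"
    and "\<And>p. (p, q0) \<in> R \<Longrightarrow> f p0 \<le> f p"
    using finite_rel_extremal_pair[of R f f] by auto
  then show ?thesis
    using that[of p0 q0] unfolding R_def by blast
qed

lemma beta_alg_nonneg: "0 \<le> beta_alg TYPE('k::comm_ring_1) N eps ind f k"
  unfolding beta_alg_def by (rule Sup_upper) simp

locale morse_complex =
  fixes N :: "'p::finite \<Rightarrow> 'p \<Rightarrow> int" and eps :: "nat \<Rightarrow> int" and ind :: "'p \<Rightarrow> nat"
  assumes N_grading: "\<And>p q. N p q \<noteq> 0 \<Longrightarrow> ind p = Suc (ind q)"
    and eps_sign: "\<And>m. eps m = 1 \<or> eps m = -1"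
begin

lemma dF_in_chains:
  assumes "z \<in> chains ind (Suc k)"
  shows "(dF N z :: 'p \<Rightarrow> 'k::comm_ring_1) \<in> chains ind k"
  unfolding chains_def
proof (intro CollectI allI impI)
  fix q
  assume "dF N z q \<noteq> 0"
  then obtain p where "of_int (N p q) * z p \<noteq> (0::'k)"
    unfolding dF_def by (metis (mono_tags, lifting) sum.neutral)
  then have "N p q \<noteq> 0" and "z p \<noteq> 0"
    by auto
  then show "ind q = k"
    using N_grading[of p q] assms by (auto simp: chains_def)
qed

lemma dMF_in_chains:
  assumes "u \<in> chains ind k"
  shows "(dMF N eps ind u :: 'p \<Rightarrow> 'k::comm_ring_1) \<in> chains ind (Suc k)"
  unfolding chains_def
proof (intro CollectI allI impI)
  fix p
  assume "dMF N eps ind u p \<noteq> 0"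
  then obtain q where "of_int (eps (ind q) * N p q) * u q \<noteq> (0::'k)"
    unfolding dMF_def by (metis (mono_tags, lifting) sum.neutral)
  then have "N p q \<noteq> 0" and "u q \<noteq> 0"
    by auto
  then show "ind p = Suc k"
    using N_grading[of p q] assms by (auto simp: chains_def)
qed

lemma of_int_eps_mult_eq_0_iff: "of_int (eps k) * a = 0 \<longleftrightarrow> a = (0::'k::comm_ring_1)"
  using eps_sign[of k] by auto

lemma beta_alg_le_iff:
  "beta_alg TYPE('k::comm_ring_1) N eps ind f k \<le> B \<longleftrightarrow> 0 \<le> B \<and>
    (\<forall>u \<in> chains ind k. \<forall>z \<in> chains ind (Suc k). Pairing u (dF N z) \<noteq> (0::'k) \<longrightarrow>
       - lev (\<lambda>p. - f p) (dMF N eps ind u) - lev f (dF N z) \<le> B)"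
proof -
  have linked_iff: "LambdaF N ind k (dMF N eps ind u) (dF N z) \<noteq> 0 \<longleftrightarrow> Pairing u (dF N z) \<noteq> (0::'k)"
    if "u \<in> chains ind k" and "z \<in> chains ind (Suc k)" for u z
    using LambdaF_dMF_dF[OF that, of N eps] of_int_eps_mult_eq_0_iff by auto
  have "{- lev (\<lambda>p. - f p) x - lev f y | x y :: 'p \<Rightarrow> 'k.
            x \<in> dMF N eps ind ` chains ind k \<and> y \<in> dF N ` chains ind (Suc k) \<and>
            LambdaF N ind k x y \<noteq> 0}
      = {- lev (\<lambda>p. - f p) (dMF N eps ind u) - lev f (dF N z) | u z :: 'p \<Rightarrow> 'k.
            u \<in> chains ind k \<and> z \<in> chains ind (Suc k) \<and> Pairing u (dF N z) \<noteq> 0}"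
    using linked_iff by fastforce
  then show ?thesis
    unfolding beta_alg_def Sup_le_iff by auto
qed

lemma positive_linked_gap:
  fixes c :: "'p \<Rightarrow> 'k::comm_ring_1"
  assumes N_decr: "\<And>p q. N p q \<noteq> 0 \<Longrightarrow> f q < f p"
    and c: "c \<in> chains ind (Suc k)" and "dF N c q \<noteq> 0"
  obtains u z :: "'p \<Rightarrow> 'k" where "u \<in> chains ind k" and "z \<in> chains ind (Suc k)"
    and "Pairing u (dF N z) \<noteq> 0"
    and "0 < - lev (\<lambda>p. - f p) (dMF N eps ind u) - lev f (dF N z)"
proof -
  obtain p0 q0 where ind_p0: "ind p0 = Suc k" and N_p0q0: "of_int (N p0 q0) \<noteq> (0::'k)"
    and q0_max: "\<And>p q. ind p = Suc k \<Longrightarrow> of_int (N p q) \<noteq> (0::'k) \<Longrightarrow> f q \<le> f q0"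
    and p0_min: "\<And>p. ind p = Suc k \<Longrightarrow> of_int (N p q0) \<noteq> (0::'k) \<Longrightarrow> f p0 \<le> f p"
    using exists_extremal_incidence[where f = f, OF c \<open>dF N c q \<noteq> 0\<close>] by metis
  then have ind_q0: "ind q0 = k"
    using N_grading[of p0 q0] by (metis Suc_inject of_int_0)
  define u where "u = (\<lambda>q. if q = q0 then (1::'k) else 0)"
  define z where "z = (\<lambda>p. if p = p0 then (1::'k) else 0)"
  have u: "u \<in> chains ind k" and z: "z \<in> chains ind (Suc k)"
    unfolding u_def z_def chains_def using ind_q0 ind_p0 by auto
  have x_eq: "dMF N eps ind u = (\<lambda>p. of_int (eps k) * of_int (N p q0))"
    unfolding u_def dMF_point_mass ind_q0 by simp
  have y_eq: "dF N z = (\<lambda>q. of_int (N p0 q))"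
    unfolding z_def dF_point_mass ..
  have linked: "Pairing u (dF N z) \<noteq> 0"
    unfolding y_eq u_def Pairing_point_mass_left using N_p0q0 .
  have x_supp: "f p0 \<le> f p" if "dMF N eps ind u p \<noteq> 0" for p
  proof -
    have "of_int (N p q0) \<noteq> (0::'k)"
      using that unfolding x_eq by auto
    moreover then have "ind p = Suc k"
      using N_grading[of p q0] ind_q0 by (metis of_int_0)
    ultimately show ?thesis
      using p0_min by blast
  qed
  have y_supp: "f q \<le> f q0" if "dF N z q \<noteq> 0" for q
    using that q0_max[OF ind_p0] unfolding y_eq by simp
  have "dMF N eps ind u p0 \<noteq> 0" and "dF N z q0 \<noteq> 0"
    unfolding x_eq y_eq using N_p0q0 of_int_eps_mult_eq_0_iff by auto
  then obtain px qy where px: "dMF N eps ind u px \<noteq> 0" and qy: "dF N z qy \<noteq> 0"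
    and gap: "- lev (\<lambda>p. - f p) (dMF N eps ind u) - lev f (dF N z) = ereal (f px - f qy)"
    by (rule lev_gap_attained)
  have "f q0 < f p0"
    using N_decr[of p0 q0] N_p0q0 by (metis of_int_0)
  with x_supp[OF px] y_supp[OF qy] have "0 < f px - f qy"
    by linarith
  then show ?thesis
    using that[OF u z linked] gap by simp
qed

lemma beta_alg_eq_0_iff:
  assumes N_decr: "\<And>p q. N p q \<noteq> 0 \<Longrightarrow> f q < f p"
  shows "beta_alg TYPE('k::comm_ring_1) N eps ind f k = 0 \<longleftrightarrow>
           (\<forall>c \<in> chains ind (Suc k). \<forall>q. dF N (c :: 'p \<Rightarrow> 'k) q = 0)"
proof -
  have "beta_alg TYPE('k) N eps ind f k = 0 \<longleftrightarrow> beta_alg TYPE('k) N eps ind f k \<le> 0"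
    using beta_alg_nonneg[of N eps ind f k] by (auto intro: order.antisym)
  also have "\<dots> \<longleftrightarrow> (\<forall>u \<in> chains ind k. \<forall>z \<in> chains ind (Suc k). Pairing u (dF N z) \<noteq> (0::'k) \<longrightarrow>
       - lev (\<lambda>p. - f p) (dMF N eps ind u) - lev f (dF N z) \<le> 0)"
    by (rule beta_alg_le_iff[THEN trans]) simp
  also have "\<dots> \<longleftrightarrow> (\<forall>c \<in> chains ind (Suc k). \<forall>q. dF N (c :: 'p \<Rightarrow> 'k) q = 0)"
  proof
    assume gaps: "\<forall>u \<in> chains ind k. \<forall>z \<in> chains ind (Suc k). Pairing u (dF N z) \<noteq> (0::'k) \<longrightarrow>
       - lev (\<lambda>p. - f p) (dMF N eps ind u) - lev f (dF N z) \<le> 0"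
    show "\<forall>c \<in> chains ind (Suc k). \<forall>q. dF N (c :: 'p \<Rightarrow> 'k) q = 0"
    proof (intro ballI allI)
      fix c :: "'p \<Rightarrow> 'k" and q :: 'p
      assume c: "c \<in> chains ind (Suc k)"
      show "dF N c q = 0"
      proof (rule ccontr)
        assume "dF N c q \<noteq> 0"
        then obtain u z :: "'p \<Rightarrow> 'k" where "u \<in> chains ind k" "z \<in> chains ind (Suc k)"
          "Pairing u (dF N z) \<noteq> 0" "0 < - lev (\<lambda>p. - f p) (dMF N eps ind u) - lev f (dF N z)"
          using positive_linked_gap[where f = f, OF N_decr c] by blast
        with gaps show False
          by (meson not_le)
      qed
    qed
  next
    assume "\<forall>c \<in> chains ind (Suc k). \<forall>q. dF N (c :: 'p \<Rightarrow> 'k) q = 0"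
    then show "\<forall>u \<in> chains ind k. \<forall>z \<in> chains ind (Suc k). Pairing u (dF N z) \<noteq> (0::'k) \<longrightarrow>
       - lev (\<lambda>p. - f p) (dMF N eps ind u) - lev f (dF N z) \<le> 0"
      by (auto simp: Pairing_def)
  qed
  finally show ?thesis .
qed

lemma beta_alg_le_of_boundary_depth:
  assumes "0 \<le> \<beta>"
    and depth: "\<And>lam. dF N ` chains ind (Suc k) \<inter> CMlev ind f k lam
                  \<subseteq> dF N ` (CMlev ind f (Suc k) (lam + \<beta>) :: ('p \<Rightarrow> 'k::comm_ring_1) set)"
  shows "beta_alg TYPE('k) N eps ind f k \<le> ereal \<beta>"
  unfolding beta_alg_le_iff
proof (intro conjI ballI impI)
  fix u z :: "'p \<Rightarrow> 'k"
  assume u: "u \<in> chains ind k" and z: "z \<in> chains ind (Suc k)" and linked: "Pairing u (dF N z) \<noteq> 0"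
  define y where "y = dF N z"
  obtain q where "y q \<noteq> 0"
    using Pairing_nonzero_common_support linked y_def by blast
  then obtain qa where qa: "y qa \<noteq> 0" "lev f y = ereal (f qa)"
    by (rule lev_attained)
  have "y \<in> dF N ` chains ind (Suc k) \<inter> CMlev ind f k (f qa)"
    using dF_in_chains[OF z] z qa unfolding y_def CMlev_def by auto
  then obtain z' where z': "z' \<in> CMlev ind f (Suc k) (f qa + \<beta>)" "y = dF N z'"
    using depth by blast
  have "Pairing u (dF N z') \<noteq> 0"
    using linked z'(2) unfolding y_def by simp
  then have "Pairing (dMF N eps ind u) z' \<noteq> 0"
    by (metis Pairing_dMF[OF u] of_int_eps_mult_eq_0_iff)
  then obtain p where p: "dMF N eps ind u p \<noteq> 0" "z' p \<noteq> 0"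
    using Pairing_nonzero_common_support by blast
  obtain px qy where gap: "- lev (\<lambda>p. - f p) (dMF N eps ind u) - lev f y = ereal (f px - f qy)"
    and px_min: "\<And>p. dMF N eps ind u p \<noteq> 0 \<Longrightarrow> f px \<le> f p"
    and qy_max: "\<And>q. y q \<noteq> 0 \<Longrightarrow> f q \<le> f qy"
    using lev_gap_attained[where x = "dMF N eps ind u" and y = y, OF p(1) qa(1)] by metis
  have "f px \<le> f p" and "f qa \<le> f qy"
    using px_min[OF p(1)] qy_max[OF qa(1)] .
  moreover have "f p \<le> f qa + \<beta>"
    using z'(1) p(2) by (simp add: mem_CMlev)
  ultimately show "- lev (\<lambda>p. - f p) (dMF N eps ind u) - lev f (dF N z) \<le> ereal \<beta>"
    using gap unfolding y_def by simp
qed (simp add: \<open>0 \<le> \<beta>\<close>)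

lemma exists_cochain_above_level:
  fixes y :: "'p \<Rightarrow> 'F::field"
  assumes y: "y \<in> chains ind k" and not_bounded: "y \<notin> dF N ` CMlev ind f (Suc k) \<mu>"
  obtains u where "u \<in> chains ind k" and "Pairing u y \<noteq> 0"
    and "\<And>p. dMF N eps ind u p \<noteq> 0 \<Longrightarrow> \<mu> < f p"
proof -
  let ?U = "dF N ` CMlev ind f (Suc k) \<mu> :: ('p \<Rightarrow> 'F) set"
  have zero_U: "0 \<in> ?U"
    using imageI[OF zero_in_CMlev, of "dF N"] by (simp only: dF_zero zero_fun_def)
  have add_U: "a + b \<in> ?U" if "a \<in> ?U" and "b \<in> ?U" for a b
    using that by (auto simp flip: dF_add intro!: imageI add_in_CMlev)
  have scale_U: "(\<lambda>p. c * a p) \<in> ?U" if "a \<in> ?U" for c a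
    using that by (auto simp flip: dF_scale intro!: imageI scale_in_CMlev)
  obtain v where v_ann: "\<And>w. w \<in> ?U \<Longrightarrow> Pairing v w = 0" and v_y: "Pairing v y \<noteq> 0"
    using Pairing_separates_subspace[OF zero_U add_U scale_U not_bounded] by blast
  define u where "u = (\<lambda>q. if ind q = k then v q else 0)"
  have u: "u \<in> chains ind k"
    unfolding u_def chains_def by simp
  have "\<mu> < f p" if "dMF N eps ind u p \<noteq> 0" for p
  proof (rule ccontr)
    assume "\<not> \<mu> < f p"
    moreover have "ind p = Suc k"
      using dMF_in_chains[OF u] that by (auto simp: chains_def)
    ultimately have "(\<lambda>q. if q = p then 1 else 0) \<in> (CMlev ind f (Suc k) \<mu> :: ('p \<Rightarrow> 'F) set)"
      by (simp add: mem_CMlev)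
    moreover have "dF N (\<lambda>q. if q = p then 1 else 0) \<in> (chains ind k :: ('p \<Rightarrow> 'F) set)"
      using \<open>ind p = Suc k\<close> by (intro dF_in_chains) (simp add: chains_def)
    ultimately have "Pairing u (dF N (\<lambda>q. if q = p then 1 else 0)) = 0"
      using v_ann unfolding u_def by (simp add: Pairing_chains_restrict)
    then show False
      using that Pairing_dMF[OF u, of N eps "\<lambda>q. if q = p then 1 else 0"]
      by (simp add: Pairing_point_mass_right)
  qed
  then show ?thesis
    using that u v_y unfolding u_def by (simp add: Pairing_chains_restrict[OF y])
qed

lemma boundary_depth_of_beta_alg:
  assumes beta: "beta_alg TYPE('F::field) N eps ind f k = ereal L"
  shows "dF N ` chains ind (Suc k) \<inter> CMlev ind f k lam
           \<subseteq> dF N ` (CMlev ind f (Suc k) (lam + L) :: ('p \<Rightarrow> 'F) set)"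
proof
  fix y :: "'p \<Rightarrow> 'F"
  assume "y \<in> dF N ` chains ind (Suc k) \<inter> CMlev ind f k lam"
  then obtain z where z: "z \<in> chains ind (Suc k)" and y: "y = dF N z" and y_lev: "y \<in> CMlev ind f k lam"
    by blast
  show "y \<in> dF N ` CMlev ind f (Suc k) (lam + L)"
  proof (rule ccontr)
    assume "y \<notin> dF N ` CMlev ind f (Suc k) (lam + L)"
    moreover have "y \<in> chains ind k"
      using y_lev by (simp add: CMlev_def)
    ultimately obtain u where u: "u \<in> chains ind k" and linked: "Pairing u y \<noteq> 0"
      and above: "\<And>p. dMF N eps ind u p \<noteq> 0 \<Longrightarrow> lam + L < f p"
      using exists_cochain_above_level by blast
    have "Pairing (dMF N eps ind u) z \<noteq> 0"
      using linked unfolding y by (metis Pairing_dMF[OF u] of_int_eps_mult_eq_0_iff)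
    then obtain p where "dMF N eps ind u p \<noteq> 0"
      using Pairing_nonzero_common_support by blast
    moreover obtain q where "y q \<noteq> 0"
      using Pairing_nonzero_common_support linked by blast
    ultimately obtain px qy where px: "dMF N eps ind u px \<noteq> 0" and qy: "y qy \<noteq> 0"
      and gap: "- lev (\<lambda>p. - f p) (dMF N eps ind u) - lev f y = ereal (f px - f qy)"
      by (rule lev_gap_attained)
    have "lam + L < f px"
      using above[OF px] .
    moreover have "f qy \<le> lam"
      using y_lev qy by (simp add: mem_CMlev)
    moreover have "- lev (\<lambda>p. - f p) (dMF N eps ind u) - lev f y \<le> ereal L"
      using beta_alg_le_iff[where 'k = 'F, of f k "ereal L"] beta u z linked unfolding y by simp
    ultimately show False
      using gap by simp
  qed
qed

lemma beta_alg_eq_Inf_boundary_depth: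
  "beta_alg TYPE('F::field) N eps ind f k =
     Inf (ereal ` {\<beta>. \<beta> \<ge> 0 \<and> (\<forall>lam::real.
        dF N ` chains ind (Suc k) \<inter> CMlev ind f k lam
          \<subseteq> dF N ` (CMlev ind f (Suc k) (lam + \<beta>) :: ('p \<Rightarrow> 'F) set))})"
  (is "?beta = Inf (ereal ` ?B)")
proof (rule order.antisym)
  show "?beta \<le> Inf (ereal ` ?B)"
  proof (rule Inf_greatest)
    fix e
    assume "e \<in> ereal ` ?B"
    then obtain \<beta> where e: "e = ereal \<beta>" and "\<beta> \<in> ?B"
      by blast
    then show "?beta \<le> e"
      unfolding e by (intro beta_alg_le_of_boundary_depth) blast+
  qed
  show "Inf (ereal ` ?B) \<le> ?beta"
  proof (cases ?beta)
    case (real L)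
    have "0 \<le> L"
      using beta_alg_nonneg[where 'k = 'F, of N eps ind f k] real by simp
    moreover have "\<forall>lam. dF N ` chains ind (Suc k) \<inter> CMlev ind f k lam
        \<subseteq> dF N ` (CMlev ind f (Suc k) (lam + L) :: ('p \<Rightarrow> 'F) set)"
      using boundary_depth_of_beta_alg[OF real] by blast
    ultimately have "ereal L \<in> ereal ` ?B"
      by blast
    then show ?thesis
      unfolding real by (rule Inf_lower)
  next
    case MInf
    then have False
      using beta_alg_nonneg[where 'k = 'F, of N eps ind f k] by simp
    then show ?thesis ..
  next
    case PInf
    then show ?thesis
      by (simp only: ereal_less_eq(1))
  qed
qed

end

theorem proposition5p6:
  fixes N :: "'p::finite \<Rightarrow> 'p \<Rightarrow> int" and eps :: "nat \<Rightarrow> int"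
    and ind :: "'p \<Rightarrow> nat" and f :: "'p \<Rightarrow> real" and n k :: nat
  assumes ind_le: "\<And>p. ind p \<le> n"
    and N_grading: "\<And>p q. N p q \<noteq> 0 \<Longrightarrow> ind p = Suc (ind q)"
    and N_decr: "\<And>p q. N p q \<noteq> 0 \<Longrightarrow> f q < f p"
    and dd_zero: "\<And>p r. (\<Sum>q\<in>UNIV. N p q * N q r) = 0"
    and eps_sign: "\<And>m. eps m = 1 \<or> eps m = -1"
    and k_lt: "k < n"
  shows "(beta_alg TYPE('k::comm_ring_1) N eps ind f k = 0 \<longleftrightarrow>
            (\<forall>c \<in> chains ind (Suc k). (\<forall>q. dF N (c :: 'p \<Rightarrow> 'k) q = 0)))
       \<and> beta_alg TYPE('F::field) N eps ind f k =
           Inf (ereal ` {\<beta>. \<beta> \<ge> 0 \<and> (\<forall>lam::real.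
              dF N ` chains ind (Suc k) \<inter> CMlev ind f k lam
                \<subseteq> dF N ` (CMlev ind f (Suc k) (lam + \<beta>) :: ('p \<Rightarrow> 'F) set))})"
proof -
  interpret morse_complex N eps ind
    using N_grading eps_sign by unfold_locales
  show ?thesis
    using beta_alg_eq_0_iff[where f = f, OF N_decr] beta_alg_eq_Inf_boundary_depth by blast
qed

end
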